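(* A matrix $Y\in\mathcal{H}^{n\times r}$ is a right canonical matrix for $T$ at $\lambda_0$ if and only if (i) $Y(\lambda_0)\in\mathbb{C}^{n\times r}$ has full column rank, and (ii) $TY\Delta^{-1}\doteq 0$, i.e. $TY\Delta^{-1}$ is holomorphic in a neighborhood of $\lambda_0$.
   Context: Let $\Omega\subset\mathbb{C}$ be open and $\lambda_0\in\Omega$ fixed. $\mathcal{H}$ denotes the ring of holomorphic functions on $\Omega$, and $\mathcal{H}_0$ the ring of functions holomorphic in some neighborhood of $\lambda_0$. Write $\chi_0(\lambda)=\lambda-\lambda_0$. For meromorphic matrices $M_1,M_2$ of equal size, $M_1\doteq M_2$ means that $M_2-M_1$ is holomorphic in a neighborhood of $\lambda_0$. Throughout, $T\in\mathcal{H}^{n\times n}$ with $\det T$ not identically zero and $\det T(\lambda_0)=0$, and $r=\dim\ker T(\lambda_0)$. There exist $U_L,U_R\in\mathcal{H}_0^{n\times n}$ with $U_L(\lambda_0),U_R(\lambda_0)$ nonsingular and uniquely determined integers $m_1\ge\cdots\ge m_n\ge 0$ (the partial multiplicities) with $U_LTU_R=\mathrm{diag}(\chi_0^{m_1},\dots,\chi_0^{m_n})$; $m_i>0$ exactly for $i\le r$. Set $\Delta=\mathrm{diag}(\chi_0^{m_1},\dots,\chi_0^{m_r})$. A root function for $T$ at $\lambda_0$ is $y\in\mathcal{H}^n$ with $y(\lambda_0)\neq0$ and $T(\lambda_0)y(\lambda_0)=0$; its multiplicity $\nu(y)$ is the order of the zero of $Ty$ at $\lambda_0$. A right canonical matrix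 for $T$ at $\lambda_0$ is $Y\in\mathcal{H}^{n\times r}$ whose columns $y_1,\dots,y_r$ are root functions such that (a) $y_1(\lambda_0),\dots,y_r(\lambda_0)$ are linearly independent, (b) $\sum_{i=1}^r\nu(y_i)=\sum_{i=1}^r m_i$, (c) $\nu(y_1)\ge\cdots\ge\nu(y_r)$. *)

theory Defs
  imports "HOL-Complex_Analysis.Complex_Analysis" "Jordan_Normal_Form.DL_Rank" "Jordan_Normal_Form.Matrix_Kernel"
begin

definition hol_mat :: "complex set \<Rightarrow> nat \<Rightarrow> nat \<Rightarrow> (complex \<Rightarrow> complex mat) \<Rightarrow> bool" where
  "hol_mat S m k A \<longleftrightarrow> (\<forall>z\<in>S. A z \<in> carrier_mat m k) \<and>
     (\<forall>i<m. \<forall>j<k. (\<lambda>z. A z $$ (i,j)) holomorphic_on S)"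

definition hol_vec :: "complex set \<Rightarrow> nat \<Rightarrow> (complex \<Rightarrow> complex vec) \<Rightarrow> bool" where
  "hol_vec S m y \<longleftrightarrow> (\<forall>z\<in>S. y z \<in> carrier_vec m) \<and> (\<forall>i<m. (\<lambda>z. y z $ i) holomorphic_on S)"

definition local_smith_form ::
  "nat \<Rightarrow> (complex \<Rightarrow> complex mat) \<Rightarrow> complex \<Rightarrow> (nat \<Rightarrow> nat) \<Rightarrow> bool" where
  "local_smith_form n T z0 m \<longleftrightarrow>
     (\<forall>i j. i \<le> j \<longrightarrow> j < n \<longrightarrow> m j \<le> m i) \<and>
     (\<exists>S UL UR. open S \<and> z0 \<in> S \<and> hol_mat S n n UL \<and> hol_mat S n n UR \<and>
        det (UL z0) \<noteq> 0 \<and> det (UR z0) \<noteq> 0 \<and>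
        (\<forall>z\<in>S. UL z * T z * UR z = mat n n (\<lambda>(i,j). if i = j then (z - z0) ^ m i else 0)))"

definition vec_zero_order :: "nat \<Rightarrow> (complex \<Rightarrow> complex vec) \<Rightarrow> complex \<Rightarrow> nat \<Rightarrow> bool" where
  "vec_zero_order n f z0 k \<longleftrightarrow>
     (\<exists>S g. open S \<and> z0 \<in> S \<and> hol_vec S n g \<and> g z0 \<noteq> 0\<^sub>v n \<and>
        (\<forall>z\<in>S. f z = (z - z0) ^ k \<cdot>\<^sub>v g z))"

definition root_mult :: "nat \<Rightarrow> (complex \<Rightarrow> complex mat) \<Rightarrow> complex \<Rightarrow> (complex \<Rightarrow> complex vec) \<Rightarrow> nat" where
  "root_mult n T z0 y = (THE k. vec_zero_order n (\<lambda>z. T z *\<^sub>v y z) z0 k)"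

definition root_function ::
  "complex set \<Rightarrow> nat \<Rightarrow> (complex \<Rightarrow> complex mat) \<Rightarrow> complex \<Rightarrow> (complex \<Rightarrow> complex vec) \<Rightarrow> bool" where
  "root_function \<Omega> n T z0 y \<longleftrightarrow> hol_vec \<Omega> n y \<and> y z0 \<noteq> 0\<^sub>v n \<and> T z0 *\<^sub>v y z0 = 0\<^sub>v n"

text \<open>Right canonical matrix (columns indexed 0..r-1); m are the partial multiplicities.\<close>
definition right_canonical ::
  "complex set \<Rightarrow> nat \<Rightarrow> (complex \<Rightarrow> complex mat) \<Rightarrow> complex \<Rightarrow> (nat \<Rightarrow> nat) \<Rightarrow> nat
     \<Rightarrow> (complex \<Rightarrow> complex mat) \<Rightarrow> bool" where
  "right_canonical \<Omega> n T z0 m r Y \<longleftrightarrow>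
     hol_mat \<Omega> n r Y \<and>
     (\<forall>j<r. root_function \<Omega> n T z0 (\<lambda>z. col (Y z) j)) \<and>
     distinct (cols (Y z0)) \<and> module.lin_indpt class_ring (module_vec TYPE(complex) n) (set (cols (Y z0))) \<and>
     (\<Sum>j<r. root_mult n T z0 (\<lambda>z. col (Y z) j)) = (\<Sum>j<r. m j) \<and>
     (\<forall>i j. i \<le> j \<longrightarrow> j < r \<longrightarrow> root_mult n T z0 (\<lambda>z. col (Y z) j) \<le> root_mult n T z0 (\<lambda>z. col (Y z) i))"

text \<open>T Y Delta^{-1} \<doteq> 0: the n x r meromorphic matrix with (i,j) entry (T Y)_{ij} / chi0^{m_j}
  agrees off z0 with a matrix holomorphic in a neighbourhood of z0.\<close>
definition TYDinv_hol :: "nat \<Rightarrow> (complex \<Rightarrow> complex mat) \<Rightarrow> complex \<Rightarrow> (nat \<Rightarrow> nat) \<Rightarrow> nat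
     \<Rightarrow> (complex \<Rightarrow> complex mat) \<Rightarrow> bool" where
  "TYDinv_hol n T z0 m r Y \<longleftrightarrow>
     (\<exists>S G. open S \<and> z0 \<in> S \<and> hol_mat S n r G \<and>
        (\<forall>z\<in>S - {z0}. \<forall>i<n. \<forall>j<r. (T z * Y z) $$ (i,j) / (z - z0) ^ m j = G z $$ (i,j)))"

end

theory Submission
  imports Defs
begin

text \<open>Near \<open>z0\<close> the local Smith form gives \<open>UL T UR = D\<close> with \<open>D = diag((z - z0)^m_i)\<close>.
  Writing a holomorphic vector function as \<open>y = UR c\<close>, one gets \<open>UL T y = D c\<close>; hence if
  \<open>T y\<close> vanishes to order \<open>k\<close> then \<open>c_i(z0) = 0\<close> for every \<open>i\<close> with \<open>m_i < k\<close>. For the columns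
  \<open>y_l\<close> of a matrix \<open>Y\<close> with \<open>Y(z0)\<close> of full column rank the vectors \<open>c(z0)\<close> are the columns of
  the injective matrix \<open>UR(z0)\<^sup>-\<^sup>1 Y(z0)\<close>, and this yields
  \<open>#{l. k \<le> \<nu>(y_l)} \<le> #{i. k \<le> m_i}\<close> for every \<open>k\<close>. This counting inequality forces
  \<open>\<nu>(y_l) = m_l\<close> for all \<open>l < r\<close>, both under the conditions (b), (c) of a canonical matrix and
  under \<open>\<nu>(y_l) \<ge> m_l\<close>, which is what \<open>T Y \<Delta>\<^sup>-\<^sup>1 \<doteq> 0\<close> says column by column.
  Finally \<open>r = dim ker T(z0)\<close> is the number of positive \<open>m_i\<close>.\<close>


section \<open>Vanishing to a given order\<close>

lemma eventually_nhds_eq_if_eventually_at: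
  fixes f g :: "'a :: t2_space \<Rightarrow> 'b :: t2_space"
  assumes "isCont f x" "isCont g x" "\<forall>\<^sub>F y in at x. f y = g y" "at x \<noteq> bot"
  shows "\<forall>\<^sub>F y in nhds x. f y = g y"
proof -
  have "(g \<longlongrightarrow> f x) (at x)"
    using Lim_transform_eventually[OF assms(1)[unfolded isCont_def] assms(3)] .
  then have "f x = g x"
    using assms(2,4) tendsto_unique unfolding isCont_def by blast
  then show ?thesis
    using assms(3) by (simp add: eventually_nhds_conv_at)
qed

lemma analytic_at_imp_eventually_analytic:
  "f analytic_on {z} \<Longrightarrow> \<forall>\<^sub>F w in nhds z. f analytic_on {w}"
proof -
  assume "f analytic_on {z}"
  then obtain S where "open S" "z \<in> S" "f holomorphic_on S" by (auto simp: analytic_at)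
  then show ?thesis
    unfolding eventually_nhds by (meson analytic_on_analytic_at analytic_on_open)
qed

definition vanishes_to_order :: "(complex \<Rightarrow> complex) \<Rightarrow> complex \<Rightarrow> nat \<Rightarrow> bool" where
  "vanishes_to_order f z0 k \<longleftrightarrow>
     (\<exists>g. g analytic_on {z0} \<and> (\<forall>\<^sub>F z in nhds z0. f z = (z - z0) ^ k * g z))"

lemma vanishes_to_order_0: "f analytic_on {z0} \<Longrightarrow> vanishes_to_order f z0 0"
  unfolding vanishes_to_order_def by auto

lemma vanishes_to_order_cong:
  assumes "vanishes_to_order f z0 k" "\<forall>\<^sub>F z in nhds z0. f z = h z"
  shows "vanishes_to_order h z0 k"
proof -
  obtain g where "g analytic_on {z0}" "\<forall>\<^sub>F z in nhds z0. f z = (z - z0) ^ k * g z"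
    using assms(1) unfolding vanishes_to_order_def by blast
  moreover from this(2) assms(2) have "\<forall>\<^sub>F z in nhds z0. h z = (z - z0) ^ k * g z"
    by eventually_elim simp
  ultimately show ?thesis unfolding vanishes_to_order_def by blast
qed

lemma vanishes_to_order_mono:
  assumes "vanishes_to_order f z0 k" "j \<le> k"
  shows "vanishes_to_order f z0 j"
proof -
  obtain g where g: "g analytic_on {z0}" "\<forall>\<^sub>F z in nhds z0. f z = (z - z0) ^ k * g z"
    using assms(1) unfolding vanishes_to_order_def by blast
  have "\<forall>\<^sub>F z in nhds z0. f z = (z - z0) ^ j * ((z - z0) ^ (k - j) * g z)"
    using g(2) by eventually_elim (simp add: assms(2) mult.assoc flip: power_add)
  moreover have "(\<lambda>z. (z - z0) ^ (k - j) * g z) analytic_on {z0}"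
    using g(1) by (intro analytic_intros)
  ultimately show ?thesis unfolding vanishes_to_order_def by blast
qed

lemma vanishes_to_order_add:
  assumes "vanishes_to_order f z0 k" "vanishes_to_order h z0 k"
  shows "vanishes_to_order (\<lambda>z. f z + h z) z0 k"
proof -
  obtain g g' where "g analytic_on {z0}" "g' analytic_on {z0}"
    "\<forall>\<^sub>F z in nhds z0. f z = (z - z0) ^ k * g z" "\<forall>\<^sub>F z in nhds z0. h z = (z - z0) ^ k * g' z"
    using assms unfolding vanishes_to_order_def by blast
  then show ?thesis unfolding vanishes_to_order_def
    by (intro exI[of _ "\<lambda>z. g z + g' z"] conjI analytic_intros)
      (auto elim: eventually_elim2 simp: distrib_left)
qed

lemma vanishes_to_order_sum:
  assumes "finite A" "\<And>a. a \<in> A \<Longrightarrow> vanishes_to_order (f a) z0 k"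
  shows "vanishes_to_order (\<lambda>z. \<Sum>a\<in>A. f a z) z0 k"
  using assms
proof (induction A rule: finite_induct)
  case empty
  show ?case unfolding vanishes_to_order_def by (auto intro!: exI[of _ "\<lambda>_. 0"])
qed (simp add: vanishes_to_order_add)

lemma vanishes_to_order_mult_left:
  assumes "h analytic_on {z0}" "vanishes_to_order f z0 k"
  shows "vanishes_to_order (\<lambda>z. h z * f z) z0 k"
proof -
  obtain g where "g analytic_on {z0}" "\<forall>\<^sub>F z in nhds z0. f z = (z - z0) ^ k * g z"
    using assms(2) unfolding vanishes_to_order_def by blast
  then show ?thesis unfolding vanishes_to_order_def using assms(1)
    by (intro exI[of _ "\<lambda>z. h z * g z"] conjI analytic_intros)
      (auto elim: eventually_mono simp: algebra_simps)
qed

lemma vanishes_to_order_imp_zero: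
  assumes "vanishes_to_order f z0 k" "0 < k"
  shows "f z0 = 0"
  using assms unfolding vanishes_to_order_def by (auto dest: eventually_nhds_x_imp_x)

lemma vanishes_to_order_Suc_iff:
  assumes g: "g analytic_on {z0}" and f: "\<forall>\<^sub>F z in nhds z0. f z = (z - z0) ^ k * g z"
  shows "vanishes_to_order f z0 (Suc k) \<longleftrightarrow> g z0 = 0"
proof
  assume "vanishes_to_order f z0 (Suc k)"
  then obtain h where h: "h analytic_on {z0}" "\<forall>\<^sub>F z in nhds z0. f z = (z - z0) ^ Suc k * h z"
    unfolding vanishes_to_order_def by blast
  have "\<forall>\<^sub>F z in at z0. f z = (z - z0) ^ k * g z \<and> f z = (z - z0) ^ Suc k * h z"
    using eventually_conj[OF f h(2)] by (simp add: eventually_nhds_conv_at)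
  moreover have "\<forall>\<^sub>F z in at z0. z \<noteq> z0" by (rule eventually_neq_at_within)
  ultimately have "\<forall>\<^sub>F z in at z0. g z = (z - z0) * h z"
    by eventually_elim (auto simp: mult.assoc)
  then have "\<forall>\<^sub>F z in nhds z0. g z = (z - z0) * h z"
    by (rule eventually_nhds_eq_if_eventually_at[rotated 2])
      (use g h(1) in \<open>auto intro!: analytic_at_imp_isCont analytic_intros\<close>)
  then show "g z0 = 0" by (auto dest: eventually_nhds_x_imp_x)
next
  assume g0: "g z0 = 0"
  obtain S where S: "open S" "z0 \<in> S" "g holomorphic_on S" using g analytic_at by blast
  define h where "h z = (if z = z0 then deriv g z0 else (g z - g z0) / (z - z0))" for z
  have "h analytic_on {z0}"
    unfolding h_def using pole_lemma_open[OF S(3,1)] S holomorphic_on_imp_analytic_at by blast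
  moreover have "\<forall>\<^sub>F z in nhds z0. f z = (z - z0) ^ Suc k * h z"
    using f by eventually_elim (simp add: h_def g0)
  ultimately show "vanishes_to_order f z0 (Suc k)" unfolding vanishes_to_order_def by blast
qed

lemma vanishes_to_order_family:
  assumes "finite A" "\<And>a. a \<in> A \<Longrightarrow> vanishes_to_order (f a) z0 (k a)"
  obtains S g where "open S" "z0 \<in> S"
    "\<And>a. a \<in> A \<Longrightarrow> g a holomorphic_on S"
    "\<And>a z. a \<in> A \<Longrightarrow> z \<in> S \<Longrightarrow> f a z = (z - z0) ^ k a * g a z"
proof -
  obtain g where g: "\<And>a. a \<in> A \<Longrightarrow> g a analytic_on {z0}"
      "\<And>a. a \<in> A \<Longrightarrow> \<forall>\<^sub>F z in nhds z0. f a z = (z - z0) ^ k a * g a z"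
    using assms(2) unfolding vanishes_to_order_def by metis
  have "\<forall>\<^sub>F z in nhds z0. \<forall>a\<in>A. g a analytic_on {z} \<and> f a z = (z - z0) ^ k a * g a z"
    using g by (intro eventually_ball_finite[OF assms(1)] ballI eventually_conj
        analytic_at_imp_eventually_analytic)
  then obtain S where S: "open S" "z0 \<in> S"
    "\<And>z a. z \<in> S \<Longrightarrow> a \<in> A \<Longrightarrow> g a analytic_on {z} \<and> f a z = (z - z0) ^ k a * g a z"
    unfolding eventually_nhds by blast
  have "g a holomorphic_on S" if "a \<in> A" for a
    using S that analytic_on_analytic_at analytic_on_open by metis
  with S show ?thesis using that by blast
qed

section \<open>Holomorphic matrix functions\<close>

lemma hol_mat_subset: "hol_mat S n k A \<Longrightarrow> S' \<subseteq> S \<Longrightarrow> hol_mat S' n k A"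
  unfolding hol_mat_def using holomorphic_on_subset by blast

lemma hol_mat_cong:
  assumes "hol_mat S n k A" "\<And>z. z \<in> S \<Longrightarrow> B z = A z"
  shows "hol_mat S n k B"
proof -
  have "(\<lambda>z. B z $$ (i, j)) holomorphic_on S \<longleftrightarrow> (\<lambda>z. A z $$ (i, j)) holomorphic_on S" for i j
    by (rule holomorphic_cong) (simp_all add: assms(2))
  with assms show ?thesis unfolding hol_mat_def by simp
qed

lemma hol_vec_cong:
  assumes "hol_vec S n v" "\<And>z. z \<in> S \<Longrightarrow> w z = v z"
  shows "hol_vec S n w"
proof -
  have "(\<lambda>z. w z $ i) holomorphic_on S \<longleftrightarrow> (\<lambda>z. v z $ i) holomorphic_on S" for i
    by (rule holomorphic_cong) (simp_all add: assms(2))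
  with assms show ?thesis unfolding hol_vec_def by simp
qed

lemma hol_mat_mat:
  assumes "\<And>i j. i < n \<Longrightarrow> j < k \<Longrightarrow> (\<lambda>z. f z i j) holomorphic_on S"
  shows "hol_mat S n k (\<lambda>z. mat n k (\<lambda>(i, j). f z i j))"
  using assms unfolding hol_mat_def by simp

lemma hol_vec_vec:
  assumes "\<And>i. i < n \<Longrightarrow> (\<lambda>z. f z i) holomorphic_on S"
  shows "hol_vec S n (\<lambda>z. vec n (f z))"
  using assms unfolding hol_vec_def by simp

lemma hol_mat_entry_analytic:
  "hol_mat S n k A \<Longrightarrow> open S \<Longrightarrow> z \<in> S \<Longrightarrow> i < n \<Longrightarrow> j < k \<Longrightarrow>
     (\<lambda>z. A z $$ (i, j)) analytic_on {z}"
  unfolding hol_mat_def by (meson holomorphic_on_imp_analytic_at)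

lemma hol_vec_entry_analytic:
  "hol_vec S n v \<Longrightarrow> open S \<Longrightarrow> z \<in> S \<Longrightarrow> i < n \<Longrightarrow> (\<lambda>z. v z $ i) analytic_on {z}"
  unfolding hol_vec_def by (meson holomorphic_on_imp_analytic_at)

lemma hol_mat_col: "hol_mat S n k A \<Longrightarrow> j < k \<Longrightarrow> hol_vec S n (\<lambda>z. col (A z) j)"
  by (rule hol_vec_cong[of _ _ "\<lambda>z. vec n (\<lambda>i. A z $$ (i, j))"])
    (auto simp: hol_mat_def intro!: hol_vec_vec eq_vecI)

lemma index_mult_mat_vec_sum:
  "A \<in> carrier_mat nr nc \<Longrightarrow> v \<in> carrier_vec nc \<Longrightarrow> i < nr \<Longrightarrow>
     (A *\<^sub>v v) $ i = (\<Sum>j<nc. A $$ (i, j) * v $ j)"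
  by (auto simp: scalar_prod_def lessThan_atLeast0 intro!: sum.cong)

lemma index_mult_mat_col:
  "A \<in> carrier_mat nr n \<Longrightarrow> B \<in> carrier_mat n nc \<Longrightarrow> i < nr \<Longrightarrow> j < nc \<Longrightarrow>
    (A * B) $$ (i, j) = (A *\<^sub>v col B j) $ i"
  by simp

lemma hol_vec_mult_mat_vec:
  assumes "hol_mat S n k A" "hol_vec S k v"
  shows "hol_vec S n (\<lambda>z. A z *\<^sub>v v z)"
proof (rule hol_vec_cong)
  show "hol_vec S n (\<lambda>z. vec n (\<lambda>i. \<Sum>j<k. A z $$ (i, j) * v z $ j))"
    using assms by (intro hol_vec_vec holomorphic_intros) (auto simp: hol_mat_def hol_vec_def)
  show "A z *\<^sub>v v z = vec n (\<lambda>i. \<Sum>j<k. A z $$ (i, j) * v z $ j)" if "z \<in> S" for z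
    using assms that by (intro eq_vecI) (auto simp: hol_mat_def hol_vec_def intro!: index_mult_mat_vec_sum)
qed

lemma hol_det:
  assumes "hol_mat S n n A"
  shows "(\<lambda>z. det (A z)) holomorphic_on S"
proof (rule holomorphic_transform)
  show "(\<lambda>z. \<Sum>p\<in>{p. p permutes {0..<n}}. signof p * (\<Prod>i=0..<n. A z $$ (i, p i)))
      holomorphic_on S"
    using assms by (intro holomorphic_intros)
      (auto simp: hol_mat_def dest: permutes_in_image[THEN iffD2])
  show "(\<Sum>p\<in>{p. p permutes {0..<n}}. signof p * (\<Prod>i=0..<n. A z $$ (i, p i))) = det (A z)"
    if "z \<in> S" for z
    using assms that by (auto simp: hol_mat_def intro!: det_def'[symmetric])
qed

lemma hol_mat_delete:
  assumes "hol_mat S n n A"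
  shows "hol_mat S (n - 1) (n - 1) (\<lambda>z. mat_delete (A z) i j)"
  by (rule hol_mat_cong[OF hol_mat_mat[of "n - 1" "n - 1"
        "\<lambda>z a b. A z $$ (if a < i then a else Suc a, if b < j then b else Suc b)"]])
    (use assms in \<open>auto simp: hol_mat_def mat_delete_def\<close>)

lemma hol_mat_adj:
  assumes "hol_mat S n n A"
  shows "hol_mat S n n (\<lambda>z. adj_mat (A z))"
  by (rule hol_mat_cong[OF hol_mat_mat[of n n "\<lambda>z a b. cofactor (A z) b a"]])
    (use assms in \<open>auto simp: hol_mat_def adj_mat_def cofactor_def
       intro!: holomorphic_intros hol_det[OF hol_mat_delete]\<close>)

lemma hol_mat_smult:
  assumes "f holomorphic_on S" "hol_mat S n k A"
  shows "hol_mat S n k (\<lambda>z. f z \<cdot>\<^sub>m A z)"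
  by (rule hol_mat_cong[OF hol_mat_mat[of n k "\<lambda>z i j. f z * A z $$ (i, j)"]])
    (use assms in \<open>auto simp: hol_mat_def intro!: holomorphic_intros eq_matI\<close>)

definition vec_vanishes_to_order :: "nat \<Rightarrow> (complex \<Rightarrow> complex vec) \<Rightarrow> complex \<Rightarrow> nat \<Rightarrow> bool" where
  "vec_vanishes_to_order n F z0 k \<longleftrightarrow> (\<forall>i<n. vanishes_to_order (\<lambda>z. F z $ i) z0 k)"

lemma vec_vanishes_to_order_mono:
  "vec_vanishes_to_order n F z0 k \<Longrightarrow> j \<le> k \<Longrightarrow> vec_vanishes_to_order n F z0 j"
  unfolding vec_vanishes_to_order_def using vanishes_to_order_mono by blast

lemma vec_vanishes_to_order_mult_mat_vec:
  assumes S: "open S" "z0 \<in> S" and A: "hol_mat S n' n A"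
    and F: "\<And>z. z \<in> S \<Longrightarrow> F z \<in> carrier_vec n" and van: "vec_vanishes_to_order n F z0 k"
  shows "vec_vanishes_to_order n' (\<lambda>z. A z *\<^sub>v F z) z0 k"
  unfolding vec_vanishes_to_order_def
proof (intro allI impI)
  fix i assume i: "i < n'"
  have "vanishes_to_order (\<lambda>z. \<Sum>j<n. A z $$ (i, j) * F z $ j) z0 k"
    using van A S i unfolding vec_vanishes_to_order_def
    by (intro vanishes_to_order_sum vanishes_to_order_mult_left hol_mat_entry_analytic) auto
  moreover have "\<forall>\<^sub>F z in nhds z0. (\<Sum>j<n. A z $$ (i, j) * F z $ j) = (A z *\<^sub>v F z) $ i"
    using S A F i unfolding eventually_nhds hol_mat_def
    by (intro exI[of _ S]) (auto intro!: index_mult_mat_vec_sum[symmetric])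
  ultimately show "vanishes_to_order (\<lambda>z. (A z *\<^sub>v F z) $ i) z0 k"
    by (rule vanishes_to_order_cong)
qed

lemma vec_zero_order_iff:
  assumes S: "open S" "z0 \<in> S" and F: "hol_vec S n F"
  shows "vec_zero_order n F z0 k \<longleftrightarrow>
    vec_vanishes_to_order n F z0 k \<and> \<not> vec_vanishes_to_order n F z0 (Suc k)"
proof
  assume "vec_zero_order n F z0 k"
  then obtain S' G where S': "open S'" "z0 \<in> S'" and G: "hol_vec S' n G" "G z0 \<noteq> 0\<^sub>v n"
    and FG: "\<And>z. z \<in> S' \<Longrightarrow> F z = (z - z0) ^ k \<cdot>\<^sub>v G z"
    unfolding vec_zero_order_def by blast
  have an: "(\<lambda>z. G z $ i) analytic_on {z0}" if "i < n" for i
    by (rule hol_vec_entry_analytic[OF G(1) S' that])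
  have ev: "\<forall>\<^sub>F z in nhds z0. F z $ i = (z - z0) ^ k * G z $ i" if "i < n" for i
    using S' G(1) that unfolding eventually_nhds hol_vec_def by (intro exI[of _ S']) (auto simp: FG)
  have "G z0 \<in> carrier_vec n" using G(1) S'(2) unfolding hol_vec_def by blast
  then obtain i where i: "i < n" "G z0 $ i \<noteq> 0"
    using G(2) eq_vecI[of "G z0" "0\<^sub>v n"] by fastforce
  have "vanishes_to_order (\<lambda>z. F z $ j) z0 k" if "j < n" for j
    unfolding vanishes_to_order_def using an[OF that] ev[OF that] by blast
  moreover have "\<not> vanishes_to_order (\<lambda>z. F z $ i) z0 (Suc k)"
    using vanishes_to_order_Suc_iff[OF an ev] i by blast
  ultimately show "vec_vanishes_to_order n F z0 k \<and> \<not> vec_vanishes_to_order n F z0 (Suc k)"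
    unfolding vec_vanishes_to_order_def using i(1) by blast
next
  assume van: "vec_vanishes_to_order n F z0 k \<and> \<not> vec_vanishes_to_order n F z0 (Suc k)"
  obtain S' g where S': "open S'" "z0 \<in> S'" and g: "\<And>i. i < n \<Longrightarrow> g i holomorphic_on S'"
    and Fg: "\<And>i z. i < n \<Longrightarrow> z \<in> S' \<Longrightarrow> F z $ i = (z - z0) ^ k * g i z"
    using vanishes_to_order_family[of "{..<n}" "\<lambda>i z. F z $ i" z0 "\<lambda>_. k"] van
    unfolding vec_vanishes_to_order_def by auto
  define G where "G z = vec n (\<lambda>i. g i z)" for z
  have "g i z0 \<noteq> 0" if "i < n" "\<not> vanishes_to_order (\<lambda>z. F z $ i) z0 (Suc k)" for i
  proof -
    have "\<forall>\<^sub>F z in nhds z0. F z $ i = (z - z0) ^ k * g i z"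
      using S' that(1) unfolding eventually_nhds by (auto intro!: exI[of _ S'] Fg)
    moreover have "g i analytic_on {z0}"
      using g[OF that(1)] S' holomorphic_on_imp_analytic_at by blast
    ultimately show ?thesis
      using that(2) by (simp add: vanishes_to_order_Suc_iff)
  qed
  then have "G z0 \<noteq> 0\<^sub>v n"
    using van unfolding vec_vanishes_to_order_def G_def
    by (metis index_vec index_zero_vec(1))
  moreover have "hol_vec (S \<inter> S') n G"
    unfolding G_def by (intro hol_vec_vec holomorphic_on_subset[OF g]) auto
  moreover have "F z = (z - z0) ^ k \<cdot>\<^sub>v G z" if "z \<in> S \<inter> S'" for z
    using F that by (intro eq_vecI) (auto simp: hol_vec_def G_def Fg)
  ultimately show "vec_zero_order n F z0 k"
    unfolding vec_zero_order_def using S S' by (intro exI[of _ "S \<inter> S'"] exI[of _ G]) auto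
qed

lemma vec_vanishes_to_order_iff_le_zero_order:
  assumes S: "open S" "z0 \<in> S" and F: "hol_vec S n F"
    and bound: "\<not> vec_vanishes_to_order n F z0 K"
  shows "vec_vanishes_to_order n F z0 k \<longleftrightarrow> k \<le> (THE k. vec_zero_order n F z0 k)"
proof -
  let ?P = "vec_vanishes_to_order n F z0"
  have bounded: "j < K" if "?P j" for j
    using bound vec_vanishes_to_order_mono[OF that] by (meson not_le)
  have "?P 0"
    unfolding vec_vanishes_to_order_def
    using hol_vec_entry_analytic[OF F S] by (auto intro: vanishes_to_order_0)
  define \<nu> where "\<nu> = (GREATEST j. ?P j)"
  have P_\<nu>: "?P \<nu>" and le_\<nu>: "\<And>j. ?P j \<Longrightarrow> j \<le> \<nu>"
    unfolding \<nu>_def using \<open>?P 0\<close> bounded by (auto intro: GreatestI_nat Greatest_le_nat less_imp_le)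
  have P_iff: "?P j \<longleftrightarrow> j \<le> \<nu>" for j
    using le_\<nu> vec_vanishes_to_order_mono[OF P_\<nu>] by blast
  have "(THE k. vec_zero_order n F z0 k) = \<nu>"
    by (rule the_equality) (auto simp: vec_zero_order_iff[OF S F] P_iff)
  then show ?thesis using P_iff by simp
qed

lemma TYDinv_hol_iff:
  assumes \<Omega>: "open \<Omega>" "z0 \<in> \<Omega>" and T: "hol_mat \<Omega> n n T" and Y: "hol_mat \<Omega> n r Y"
  shows "TYDinv_hol n T z0 m r Y \<longleftrightarrow>
    (\<forall>l<r. vec_vanishes_to_order n (\<lambda>z. T z *\<^sub>v col (Y z) l) z0 (m l))"
proof
  assume "TYDinv_hol n T z0 m r Y"
  then obtain S G where S: "open S" "z0 \<in> S" and G: "hol_mat S n r G"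
    and div: "\<And>z i l. z \<in> S - {z0} \<Longrightarrow> i < n \<Longrightarrow> l < r \<Longrightarrow>
      (T z * Y z) $$ (i, l) / (z - z0) ^ m l = G z $$ (i, l)"
    unfolding TYDinv_hol_def by blast
  show "\<forall>l<r. vec_vanishes_to_order n (\<lambda>z. T z *\<^sub>v col (Y z) l) z0 (m l)"
    unfolding vec_vanishes_to_order_def vanishes_to_order_def
  proof (intro allI impI)
    fix l i assume l: "l < r" and i: "i < n"
    have "\<forall>\<^sub>F z in at z0. z \<in> S \<inter> \<Omega>"
      using eventually_nhds_in_open[OF open_Int[OF S(1) \<Omega>(1)]] S(2) \<Omega>(2)
      by (simp add: eventually_nhds_conv_at)
    then have "\<forall>\<^sub>F z in at z0. (T z *\<^sub>v col (Y z) l) $ i = (z - z0) ^ m l * G z $$ (i, l)"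
      using eventually_neq_at_within[of z0 z0 UNIV]
    proof eventually_elim
      case (elim z)
      then have "(T z * Y z) $$ (i, l) = (T z *\<^sub>v col (Y z) l) $ i"
        using T Y i l unfolding hol_mat_def by (auto intro: index_mult_mat_col)
      with div[of z i l] elim i l show ?case by (simp add: field_simps)
    qed
    then have "\<forall>\<^sub>F z in nhds z0. (T z *\<^sub>v col (Y z) l) $ i = (z - z0) ^ m l * G z $$ (i, l)"
      using hol_vec_entry_analytic[OF hol_vec_mult_mat_vec[OF T hol_mat_col[OF Y l]] \<Omega> i]
        hol_mat_entry_analytic[OF G S i l]
      by (intro eventually_nhds_eq_if_eventually_at) (auto intro!: analytic_at_imp_isCont analytic_intros)
    then show "\<exists>g. g analytic_on {z0} \<and>
        (\<forall>\<^sub>F z in nhds z0. (T z *\<^sub>v col (Y z) l) $ i = (z - z0) ^ m l * g z)"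
      using hol_mat_entry_analytic[OF G S i l] by blast
  qed
next
  assume "\<forall>l<r. vec_vanishes_to_order n (\<lambda>z. T z *\<^sub>v col (Y z) l) z0 (m l)"
  then have van: "vanishes_to_order (\<lambda>z. (T z *\<^sub>v col (Y z) (snd a)) $ fst a) z0 (m (snd a))"
    if "a \<in> {..<n} \<times> {..<r}" for a
    using that unfolding vec_vanishes_to_order_def by auto
  have fin: "finite ({..<n} \<times> {..<r})" by simp
  obtain S g where S: "open S" "z0 \<in> S"
    and g: "\<And>a. a \<in> {..<n} \<times> {..<r} \<Longrightarrow> g a holomorphic_on S"
    and eq: "\<And>a z. a \<in> {..<n} \<times> {..<r} \<Longrightarrow> z \<in> S \<Longrightarrow>
      (T z *\<^sub>v col (Y z) (snd a)) $ fst a = (z - z0) ^ m (snd a) * g a z"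
    using vanishes_to_order_family[of "{..<n} \<times> {..<r}" "\<lambda>a z. (T z *\<^sub>v col (Y z) (snd a)) $ fst a"
        z0 "\<lambda>a. m (snd a)"] fin van by blast
  define G where "G z = mat n r (\<lambda>(i, l). g (i, l) z)" for z
  have "hol_mat (S \<inter> \<Omega>) n r G"
    unfolding G_def by (intro hol_mat_mat holomorphic_on_subset[OF g]) auto
  moreover have "(T z * Y z) $$ (i, l) / (z - z0) ^ m l = G z $$ (i, l)"
    if "z \<in> S \<inter> \<Omega> - {z0}" "i < n" "l < r" for z i l
    using that eq[of "(i, l)" z] T Y unfolding hol_mat_def G_def
    by (auto simp: index_mult_mat_col[of _ n n _ r])
  ultimately show "TYDinv_hol n T z0 m r Y"
    unfolding TYDinv_hol_def using S \<Omega> by (intro exI[of _ "S \<inter> \<Omega>"] exI[of _ G]) auto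
qed

lemma root_function_if_vanishes:
  assumes "z0 \<in> \<Omega>" "hol_mat \<Omega> n n T" "hol_vec \<Omega> n y" "y z0 \<noteq> 0\<^sub>v n"
    and "vec_vanishes_to_order n (\<lambda>z. T z *\<^sub>v y z) z0 k" "0 < k"
  shows "root_function \<Omega> n T z0 y"
  unfolding root_function_def
proof (intro conjI eq_vecI)
  fix i assume "i < dim_vec (0\<^sub>v n :: complex vec)"
  then show "(T z0 *\<^sub>v y z0) $ i = 0\<^sub>v n $ i"
    using assms(5,6) vanishes_to_order_imp_zero unfolding vec_vanishes_to_order_def by fastforce
qed (use assms in \<open>auto simp: hol_mat_def hol_vec_def\<close>)

section \<open>Linear algebra\<close>

lemma mult_mat_vec_unit_vec:
  fixes A :: "'a :: semiring_1 mat"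
  assumes "A \<in> carrier_mat nr nc" "j < nc"
  shows "A *\<^sub>v unit_vec nc j = col A j"
  using assms by (intro eq_vecI) auto

lemma mult_mat_vec_zero:
  fixes A :: "'a :: semiring_0 mat"
  shows "A \<in> carrier_mat nr nc \<Longrightarrow> A *\<^sub>v 0\<^sub>v nc = 0\<^sub>v nr"
  by (intro eq_vecI) auto

lemma inj_mat_col_nonzero:
  fixes A :: "'a :: field mat"
  assumes A: "A \<in> carrier_mat nr nc" and inj: "\<forall>v\<in>carrier_vec nc. A *\<^sub>v v = 0\<^sub>v nr \<longrightarrow> v = 0\<^sub>v nc"
    and j: "j < nc"
  shows "col A j \<noteq> 0\<^sub>v nr"
  using inj unit_vec_nonzero[OF j] mult_mat_vec_unit_vec[OF A j] by force

lemma inj_mat_distinct_cols: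
  fixes A :: "'a :: field mat"
  assumes A: "A \<in> carrier_mat nr nc" and inj: "\<forall>v\<in>carrier_vec nc. A *\<^sub>v v = 0\<^sub>v nr \<longrightarrow> v = 0\<^sub>v nc"
  shows "distinct (cols A)"
proof (rule ccontr)
  assume "\<not> distinct (cols A)"
  then obtain i j where ij: "i < nc" "j < nc" "i \<noteq> j" "col A i = col A j"
    using A by (auto simp: distinct_conv_nth)
  have "A *\<^sub>v (unit_vec nc i - unit_vec nc j) = col A i - col A j"
    using A ij by (simp add: mult_minus_distrib_mat_vec mult_mat_vec_unit_vec)
  also have "\<dots> = 0\<^sub>v nr" using A ij(4) by auto
  finally have "unit_vec nc i - unit_vec nc j = (0\<^sub>v nc :: 'a vec)" using inj by auto
  then have "(unit_vec nc i - unit_vec nc j) $ i = (0\<^sub>v nc :: 'a vec) $ i" by simp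
  then show False using ij by simp
qed

lemma inj_mat_iff_lin_indpt_cols:
  fixes A :: "'a :: field mat"
  assumes A: "A \<in> carrier_mat nr nc"
  shows "(\<forall>v\<in>carrier_vec nc. A *\<^sub>v v = 0\<^sub>v nr \<longrightarrow> v = 0\<^sub>v nc) \<longleftrightarrow>
    distinct (cols A) \<and> module.lin_indpt class_ring (module_vec TYPE('a) nr) (set (cols A))"
proof -
  interpret V: vec_space "TYPE('a)" nr .
  show ?thesis
    using inj_mat_distinct_cols[OF A] V.lin_depI[OF A] V.lin_depE[OF A] by metis
qed

lemma full_col_rank_iff_inj_mat:
  fixes A :: "'a :: field mat"
  assumes A: "A \<in> carrier_mat nr nc"
  shows "vec_space.rank nr A = nc \<longleftrightarrow> (\<forall>v\<in>carrier_vec nc. A *\<^sub>v v = 0\<^sub>v nr \<longrightarrow> v = 0\<^sub>v nc)"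
proof -
  interpret V: vec_space "TYPE('a)" nr .
  have "distinct (cols A)" if rank: "V.rank A = nc"
  proof (rule ccontr)
    assume "\<not> distinct (cols A)"
    then have "card (set (cols A)) < nc"
      using A card_distinct card_length[of "cols A"] by (metis cols_length carrier_matD(2) le_neq_implies_less)
    moreover obtain S where "maximal S (\<lambda>T. T \<subseteq> set (cols A) \<and> V.lin_indpt T)"
      using maximal_exists[of "\<lambda>T. T \<subseteq> set (cols A) \<and> V.lin_indpt T" "card (set (cols A))" "{}"]
      by (meson List.finite_set card_mono empty_iff empty_subsetI V.finite_lin_indpt2 rev_finite_subset)
    moreover from this have "card S \<le> card (set (cols A))"
      by (simp add: card_mono maximal_def)
    ultimately show False using V.rank_card_indpt[OF A] rank by fastforce
  qed
  then show ?thesis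
    using inj_mat_iff_lin_indpt_cols[OF A] V.full_rank_lin_indpt[OF A] V.lin_indpt_full_rank[OF A]
    by metis
qed

lemma inj_mat_dim_col_le:
  fixes A :: "'a :: field mat"
  assumes A: "A \<in> carrier_mat nr nc" and inj: "\<forall>v\<in>carrier_vec nc. A *\<^sub>v v = 0\<^sub>v nr \<longrightarrow> v = 0\<^sub>v nc"
  shows "nc \<le> nr"
proof -
  interpret V: vec_space "TYPE('a)" nr .
  have "distinct (cols A)" "V.lin_indpt (set (cols A))"
    using inj inj_mat_iff_lin_indpt_cols[OF A] by auto
  moreover have "set (cols A) \<subseteq> carrier_vec nr" using A cols_dim by blast
  ultimately have "card (set (cols A)) \<le> nr"
    using V.li_le_dim(2)[OF V.fin_dim] V.dim_is_n by fastforce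
  then show ?thesis using \<open>distinct (cols A)\<close> A by (simp add: distinct_card)
qed

lemma card_cols_supported_le:
  fixes W :: "'a :: field mat"
  assumes W: "W \<in> carrier_mat n r" and inj: "\<forall>v\<in>carrier_vec r. W *\<^sub>v v = 0\<^sub>v n \<longrightarrow> v = 0\<^sub>v r"
    and L: "L \<subseteq> {..<r}"
    and supp: "\<And>l i. l \<in> L \<Longrightarrow> p \<le> i \<Longrightarrow> i < n \<Longrightarrow> W $$ (i, l) = 0"
  shows "card L \<le> p"
proof -
  have "finite L" using L finite_subset by blast
  then obtain f where f: "bij_betw f {..<card L} L"
    using ex_bij_betw_nat_finite by (auto simp: lessThan_atLeast0)
  define M where "M = mat p (card L) (\<lambda>(i, b). W $$ (i, f b))"
  have M: "M \<in> carrier_mat p (card L)" unfolding M_def by simp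
  have "x = 0\<^sub>v (card L)" if x: "x \<in> carrier_vec (card L)" "M *\<^sub>v x = 0\<^sub>v p" for x
  proof -
    define x' where "x' = vec r (\<lambda>j. if j \<in> L then x $ inv_into {..<card L} f j else 0)"
    have x'_f: "x' $ f b = x $ b" if "b < card L" for b
    proof -
      have "f b \<in> L" using f that by (auto dest: bij_betw_apply)
      then show ?thesis
        using f L that by (auto simp: x'_def bij_betw_inv_into_left)
    qed
    have Wx': "(W *\<^sub>v x') $ i = (\<Sum>b<card L. W $$ (i, f b) * x $ b)" if "i < n" for i
    proof -
      have "(W *\<^sub>v x') $ i = (\<Sum>j<r. W $$ (i, j) * x' $ j)"
        using W that by (intro index_mult_mat_vec_sum) (auto simp: x'_def)
      also have "\<dots> = (\<Sum>j\<in>L. W $$ (i, j) * x' $ j)"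
        using L by (intro sum.mono_neutral_right) (auto simp: x'_def)
      also have "\<dots> = (\<Sum>b<card L. W $$ (i, f b) * x $ b)"
        using f x'_f by (simp add: sum.reindex_bij_betw[OF f, symmetric])
      finally show ?thesis .
    qed
    have "W *\<^sub>v x' = 0\<^sub>v n"
    proof (rule eq_vecI)
      fix i assume "i < dim_vec (0\<^sub>v n :: 'a vec)"
      then have i: "i < n" by simp
      show "(W *\<^sub>v x') $ i = 0\<^sub>v n $ i"
      proof (cases "i < p")
        case True
        have "(\<Sum>b<card L. W $$ (i, f b) * x $ b) = (M *\<^sub>v x) $ i"
          unfolding index_mult_mat_vec_sum[OF M x(1) True] using True by (simp add: M_def)
        also have "\<dots> = 0" using x(2) True by simp
        finally show ?thesis using Wx' i by simp
      next
        case False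
        then have "W $$ (i, f b) = 0" if "b < card L" for b
          using supp i f that by (auto dest: bij_betw_apply)
        then show ?thesis using Wx' i by simp
      qed
    qed (use W in simp)
    then have "x' = 0\<^sub>v r" using inj by (simp add: x'_def)
    moreover have "f b < r" if "b < card L" for b using f L that by (auto dest: bij_betw_apply)
    ultimately show "x = 0\<^sub>v (card L)"
      using x(1) x'_f by (intro eq_vecI) (auto simp flip: x'_f)
  qed
  then show ?thesis using inj_mat_dim_col_le[OF M] by blast
qed

lemma adj_mat_inverse:
  fixes A :: "'a :: field mat"
  assumes A: "A \<in> carrier_mat n n" and det: "det A \<noteq> 0"
  shows "A * ((1 / det A) \<cdot>\<^sub>m adj_mat A) = 1\<^sub>m n" "((1 / det A) \<cdot>\<^sub>m adj_mat A) * A = 1\<^sub>m n"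
proof -
  have "(1 / det A) \<cdot>\<^sub>m (det A \<cdot>\<^sub>m 1\<^sub>m n) = 1\<^sub>m n"
    using det by (intro eq_matI) auto
  then show "A * ((1 / det A) \<cdot>\<^sub>m adj_mat A) = 1\<^sub>m n" "((1 / det A) \<cdot>\<^sub>m adj_mat A) * A = 1\<^sub>m n"
    by (simp_all add: adj_mat[OF A] mult_smult_distrib[OF A adj_mat(1)[OF A]]
        mult_smult_assoc_mat[OF adj_mat(1)[OF A] A])
qed

lemma kernel_dim_mult_nonsingular:
  fixes A B C :: "'a :: field mat"
  assumes A: "A \<in> carrier_mat n n" and B: "B \<in> carrier_mat n n" and C: "C \<in> carrier_mat n n"
    and "det A \<noteq> 0" "det C \<noteq> 0"
  shows "kernel_dim (A * B * C) = kernel_dim B"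
proof -
  let ?A' = "(1 / det A) \<cdot>\<^sub>m adj_mat A" and ?C' = "(1 / det C) \<cdot>\<^sub>m adj_mat C"
  have "kernel_dim (A * (B * C)) = kernel_dim (B * C)"
    using A B C adj_mat_inverse(2)[OF A \<open>det A \<noteq> 0\<close>] adj_mat(1)[OF A]
    by (simp add: kernel_dim_def mat_kernel_mult_eq[of "B * C" n n A ?A'])
  also have "\<dots> = kernel_dim B"
    using B C adj_mat_inverse(1)[OF C \<open>det C \<noteq> 0\<close>] adj_mat(1)[OF C]
    by (simp add: kernel_dim_def mat_kernel_dim_mult_eq_right[of B n n C ?C'])
  finally show ?thesis using A B C by (simp add: assoc_mult_mat)
qed

lemma kernel_dim_zero_mat: "kernel_dim (0\<^sub>m p p :: 'a :: field mat) = p"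
proof -
  have ref: "row_echelon_form (0\<^sub>m p p :: 'a mat)"
    unfolding row_echelon_form_def by (auto intro!: exI[of _ "\<lambda>_. p"] pivot_funI)
  have no_pivots: "{i. i < p \<and> row (0\<^sub>m p p :: 'a mat) i \<noteq> 0\<^sub>v p} = {}" by auto
  show ?thesis
    using find_base_vectors(6)[OF ref zero_carrier_mat] unfolding no_pivots
    by (simp add: kernel_dim_def)
qed

section \<open>Partial multiplicities\<close>

lemma antitone_superlevel_initial:
  fixes m :: "nat \<Rightarrow> nat"
  assumes anti: "\<And>i j. i \<le> j \<Longrightarrow> j < n \<Longrightarrow> m j \<le> m i"
  shows "{i. i < n \<and> k \<le> m i} = {..<card {i. i < n \<and> k \<le> m i}}"
proof -
  define p where "p = (LEAST i. \<not> (i < n \<and> k \<le> m i))"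
  have "{i. i < n \<and> k \<le> m i} = {..<p}"
  proof (intro subset_antisym subsetI)
    fix i assume i: "i \<in> {i. i < n \<and> k \<le> m i}"
    show "i \<in> {..<p}"
    proof (rule ccontr)
      assume "i \<notin> {..<p}"
      moreover have "\<not> (p < n \<and> k \<le> m p)"
        unfolding p_def by (rule LeastI[of _ n]) simp
      ultimately show False using i anti[of p i] by auto
    qed
  qed (auto simp: p_def dest: not_less_Least)
  then show ?thesis by simp
qed

lemma kernel_dim_diag_zero_pow:
  fixes m :: "nat \<Rightarrow> nat"
  assumes anti: "\<And>i j. i \<le> j \<Longrightarrow> j < n \<Longrightarrow> m j \<le> m i"
  shows "kernel_dim (mat n n (\<lambda>(i, j). if i = j then 0 ^ m i else 0) :: 'a :: field mat)
    = card {i. i < n \<and> 0 < m i}"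
    (is "kernel_dim ?D = ?p")
proof -
  have pos: "{i. i < n \<and> 0 < m i} = {..<?p}"
    using antitone_superlevel_initial[OF anti, where k = 1] by (simp add: Suc_le_eq)
  then have m_pos: "0 < m i \<longleftrightarrow> i < ?p" if "i < n" for i
    using that by blast
  have "?p \<le> n" using card_mono[of "{..<n}" "{i. i < n \<and> 0 < m i}"] by auto
  have D: "?D = four_block_mat (0\<^sub>m ?p ?p) (0\<^sub>m ?p (n - ?p)) (0\<^sub>m (n - ?p) ?p) (1\<^sub>m (n - ?p))"
    (is "_ = ?B")
  proof (rule eq_matI)
    fix i j assume "i < dim_row ?B" "j < dim_col ?B"
    then have ij: "i < n" "j < n" using \<open>?p \<le> n\<close> by auto
    then show "?D $$ (i, j) = ?B $$ (i, j)"
      using m_pos[OF ij(1)] by (cases "i < ?p"; cases "j < ?p") (auto simp: power_0_left)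
  qed (use \<open>?p \<le> n\<close> in auto)
  have "kernel.dim (?p + (n - ?p)) ?D =
      kernel.dim ?p (0\<^sub>m ?p ?p :: 'a mat) + kernel.dim (n - ?p) (1\<^sub>m (n - ?p) :: 'a mat)"
    by (rule kernel_four_block_0_mat[OF D]) auto
  then show ?thesis
    using \<open>?p \<le> n\<close> kernel_dim_zero_mat[where 'a = 'a] kernel_one_mat(1)
    by (simp add: kernel_dim_def)
qed

lemma partial_multiplicities_eq_of_sum_eq:
  fixes m \<nu> :: "nat \<Rightarrow> nat"
  assumes m_anti: "\<And>i j. i \<le> j \<Longrightarrow> j < n \<Longrightarrow> m j \<le> m i"
    and \<nu>_anti: "\<And>i j. i \<le> j \<Longrightarrow> j < r \<Longrightarrow> \<nu> j \<le> \<nu> i"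
    and card_le: "\<And>k. card {l. l < r \<and> k \<le> \<nu> l} \<le> card {i. i < n \<and> k \<le> m i}"
    and sum_eq: "(\<Sum>j<r. \<nu> j) = (\<Sum>j<r. m j)"
    and j: "j < r"
  shows "\<nu> j = m j"
proof -
  have le: "\<nu> j \<le> m j" if j: "j < r" for j
  proof (rule ccontr)
    assume "\<not> \<nu> j \<le> m j"
    have "{..j} \<subseteq> {l. l < r \<and> \<nu> j \<le> \<nu> l}" using \<nu>_anti j by auto
    then have "Suc j \<le> card {l. l < r \<and> \<nu> j \<le> \<nu> l}"
      using card_mono[of "{l. l < r \<and> \<nu> j \<le> \<nu> l}" "{..j}"] by simp
    moreover have "{i. i < n \<and> \<nu> j \<le> m i} \<subseteq> {..<j}"
    proof
      fix i assume i: "i \<in> {i. i < n \<and> \<nu> j \<le> m i}"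
      show "i \<in> {..<j}"
        using m_anti[of j i] i \<open>\<not> \<nu> j \<le> m j\<close> by (cases "j \<le> i") auto
    qed
    then have "card {i. i < n \<and> \<nu> j \<le> m i} \<le> j"
      using card_mono[of "{..<j}"] by fastforce
    ultimately show False using card_le[of "\<nu> j"] by simp
  qed
  show ?thesis
  proof (rule ccontr)
    assume "\<nu> j \<noteq> m j"
    then have "(\<Sum>j<r. \<nu> j) < (\<Sum>j<r. m j)"
      using le j le_neq_implies_less[OF le] by (intro sum_strict_mono_ex1) auto
    then show False using sum_eq by simp
  qed
qed

lemma partial_multiplicities_eq_of_le:
  fixes m \<nu> :: "nat \<Rightarrow> nat"
  assumes card_le: "\<And>k. card {l. l < r \<and> k \<le> \<nu> l} \<le> card {i. i < n \<and> k \<le> m i}"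
    and pos: "\<And>i. i < n \<Longrightarrow> 0 < m i \<Longrightarrow> i < r"
    and le: "\<And>l. l < r \<Longrightarrow> m l \<le> \<nu> l"
    and j: "j < r"
  shows "\<nu> j = m j"
proof (rule ccontr)
  assume "\<nu> j \<noteq> m j"
  define k where "k = Suc (m j)"
  have "{i. i < n \<and> k \<le> m i} \<subseteq> {l. l < r \<and> k \<le> \<nu> l}"
    using pos le unfolding k_def by (fastforce intro: order_trans)
  moreover have "j \<in> {l. l < r \<and> k \<le> \<nu> l} - {i. i < n \<and> k \<le> m i}"
    using j le[OF j] \<open>\<nu> j \<noteq> m j\<close> by (auto simp: k_def)
  ultimately have "card {i. i < n \<and> k \<le> m i} < card {l. l < r \<and> k \<le> \<nu> l}"
    by (intro psubset_card_mono) auto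
  then show False using card_le[of k] by simp
qed

section \<open>Local Smith form\<close>

text \<open>A neighbourhood \<open>S\<close> of \<open>z0\<close> on which the local Smith form holds and \<open>UR\<close> stays
  invertible; \<open>UL\<close> is only needed to be invertible at \<open>z0\<close>.\<close>

locale smith_nbhd =
  fixes n :: nat and T :: "complex \<Rightarrow> complex mat" and z0 :: complex and m :: "nat \<Rightarrow> nat"
    and S :: "complex set" and UL UR :: "complex \<Rightarrow> complex mat"
  assumes open_S: "open S" and z0_in_S: "z0 \<in> S"
    and hol_T: "hol_mat S n n T" and hol_UL: "hol_mat S n n UL" and hol_UR: "hol_mat S n n UR"
    and det_UL: "det (UL z0) \<noteq> 0" and det_UR: "\<And>z. z \<in> S \<Longrightarrow> det (UR z) \<noteq> 0"
    and smith_eq: "\<And>z. z \<in> S \<Longrightarrow>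
      UL z * T z * UR z = mat n n (\<lambda>(i, j). if i = j then (z - z0) ^ m i else 0)"
    and m_anti: "\<And>i j. i \<le> j \<Longrightarrow> j < n \<Longrightarrow> m j \<le> m i"
begin

lemma carrier_mats:
  "z \<in> S \<Longrightarrow> T z \<in> carrier_mat n n" "z \<in> S \<Longrightarrow> UL z \<in> carrier_mat n n"
  "z \<in> S \<Longrightarrow> UR z \<in> carrier_mat n n"
  using hol_T hol_UL hol_UR unfolding hol_mat_def by auto

lemma kernel_dim_T_z0: "kernel_dim (T z0) = card {i. i < n \<and> 0 < m i}"
proof -
  have "kernel_dim (T z0) = kernel_dim (UL z0 * T z0 * UR z0)"
    using kernel_dim_mult_nonsingular[OF carrier_mats(2,1,3)[OF z0_in_S] det_UL det_UR[OF z0_in_S]]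
    by simp
  also have "\<dots> = kernel_dim (mat n n (\<lambda>(i, j). if i = j then 0 ^ m i else 0) :: complex mat)"
    using smith_eq[OF z0_in_S] by (simp cong: if_cong)
  also have "\<dots> = card {i. i < n \<and> 0 < m i}"
    using m_anti by (rule kernel_dim_diag_zero_pow)
  finally show ?thesis .
qed

lemma m_pos_iff:
  assumes "i < n"
  shows "0 < m i \<longleftrightarrow> i < kernel_dim (T z0)"
proof -
  have "{i. i < n \<and> 1 \<le> m i} = {..<card {i. i < n \<and> 1 \<le> m i}}"
    using m_anti by (rule antitone_superlevel_initial)
  then have "{i. i < n \<and> 0 < m i} = {..<kernel_dim (T z0)}"
    by (simp add: kernel_dim_T_z0 Suc_le_eq)
  then show ?thesis using assms by blast
qed

text \<open>The adjugate formula makes the inverse visibly holomorphic.\<close>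

definition UR_inv :: "complex \<Rightarrow> complex mat" where
  "UR_inv z = (1 / det (UR z)) \<cdot>\<^sub>m adj_mat (UR z)"

lemma hol_UR_inv: "hol_mat S n n UR_inv"
  unfolding UR_inv_def using det_UR
  by (intro hol_mat_smult[OF _ hol_mat_adj[OF hol_UR]] holomorphic_intros hol_det[OF hol_UR])
    auto

lemma UR_UR_inv: "z \<in> S \<Longrightarrow> UR z * UR_inv z = 1\<^sub>m n"
  unfolding UR_inv_def using adj_mat_inverse(1) carrier_mats det_UR by blast

definition smith_coords :: "(complex \<Rightarrow> complex vec) \<Rightarrow> complex \<Rightarrow> complex vec" where
  "smith_coords y z = UR_inv z *\<^sub>v y z"

lemma hol_smith_coords: "hol_vec S n y \<Longrightarrow> hol_vec S n (smith_coords y)"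
  unfolding smith_coords_def by (rule hol_vec_mult_mat_vec[OF hol_UR_inv])

lemma UR_smith_coords:
  assumes y: "hol_vec S n y" and z: "z \<in> S"
  shows "UR z *\<^sub>v smith_coords y z = y z"
proof -
  have "y z \<in> carrier_vec n" "UR_inv z \<in> carrier_mat n n"
    using y z hol_UR_inv unfolding hol_vec_def hol_mat_def by auto
  then show ?thesis
    unfolding smith_coords_def using carrier_mats(3)[OF z] UR_UR_inv[OF z]
    by (simp flip: assoc_mult_mat_vec)
qed

lemma UL_T_smith_coords:
  assumes y: "hol_vec S n y" and z: "z \<in> S" and i: "i < n"
  shows "(UL z *\<^sub>v (T z *\<^sub>v y z)) $ i = (z - z0) ^ m i * smith_coords y z $ i"
proof -
  have c: "smith_coords y z \<in> carrier_vec n"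
    using hol_smith_coords[OF y] z unfolding hol_vec_def by auto
  have "(UL z * T z * UR z) *\<^sub>v smith_coords y z = UL z *\<^sub>v (T z *\<^sub>v (UR z *\<^sub>v smith_coords y z))"
    using carrier_mats[OF z] c
    by (simp add: assoc_mult_mat_vec[of "UL z" n n "T z * UR z" n] mult_carrier_mat[of "T z" n n "UR z" n])
  then have "UL z *\<^sub>v (T z *\<^sub>v y z) = (UL z * T z * UR z) *\<^sub>v smith_coords y z"
    by (simp add: UR_smith_coords[OF y z])
  also have "\<dots> = mat n n (\<lambda>(i, j). if i = j then (z - z0) ^ m i else 0) *\<^sub>v smith_coords y z"
    using smith_eq[OF z] by simp
  finally have "(UL z *\<^sub>v (T z *\<^sub>v y z)) $ i =
      (\<Sum>j<n. (if i = j then (z - z0) ^ m i else 0) * smith_coords y z $ j)"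
    using i by (simp add: scalar_prod_def lessThan_atLeast0 carrier_vecD[OF c] cong: if_cong)
  also have "\<dots> = (\<Sum>j<n. if j = i then (z - z0) ^ m i * smith_coords y z $ i else 0)"
    by (rule sum.cong) auto
  finally show ?thesis using i by simp
qed

lemma smith_coords_vanish:
  assumes y: "hol_vec S n y" and van: "vec_vanishes_to_order n (\<lambda>z. T z *\<^sub>v y z) z0 k"
    and i: "i < n" and mk: "m i < k"
  shows "smith_coords y z0 $ i = 0"
proof -
  have "vec_vanishes_to_order n (\<lambda>z. UL z *\<^sub>v (T z *\<^sub>v y z)) z0 k"
  proof (rule vec_vanishes_to_order_mult_mat_vec[OF open_S z0_in_S hol_UL _ van])
    show "T z *\<^sub>v y z \<in> carrier_vec n" if "z \<in> S" for z
      using carrier_mats(1)[OF that] y that unfolding hol_vec_def by simp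
  qed
  then have van_i: "vanishes_to_order (\<lambda>z. (UL z *\<^sub>v (T z *\<^sub>v y z)) $ i) z0 (Suc (m i))"
    using i mk by (auto simp: vec_vanishes_to_order_def intro: vanishes_to_order_mono)
  have "\<forall>\<^sub>F z in nhds z0.
      (UL z *\<^sub>v (T z *\<^sub>v y z)) $ i = (z - z0) ^ m i * smith_coords y z $ i"
    using open_S z0_in_S UL_T_smith_coords[OF y _ i] unfolding eventually_nhds
    by (intro exI[of _ S]) simp
  from vanishes_to_order_Suc_iff[OF hol_vec_entry_analytic[OF hol_smith_coords[OF y] open_S z0_in_S i]
      this] van_i
  show ?thesis by simp
qed

lemma not_vec_vanishes_T_beyond_sum:
  assumes y: "hol_vec S n y" and y0: "y z0 \<noteq> 0\<^sub>v n"
  shows "\<not> vec_vanishes_to_order n (\<lambda>z. T z *\<^sub>v y z) z0 (Suc (\<Sum>i<n. m i))"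
proof
  assume van: "vec_vanishes_to_order n (\<lambda>z. T z *\<^sub>v y z) z0 (Suc (\<Sum>i<n. m i))"
  have "smith_coords y z0 $ i = 0" if "i < n" for i
    using smith_coords_vanish[OF y van that] member_le_sum[of i "{..<n}" m] that
    by (simp add: le_imp_less_Suc)
  then have "smith_coords y z0 = 0\<^sub>v n"
    using hol_smith_coords[OF y] z0_in_S unfolding hol_vec_def by (intro eq_vecI) auto
  then have "y z0 = UR z0 *\<^sub>v 0\<^sub>v n" using UR_smith_coords[OF y z0_in_S] by simp
  then show False using y0 mult_mat_vec_zero[OF carrier_mats(3)[OF z0_in_S]] by simp
qed

lemma vec_vanishes_T_iff_le_root_mult:
  assumes y: "hol_vec S n y" and y0: "y z0 \<noteq> 0\<^sub>v n"
  shows "vec_vanishes_to_order n (\<lambda>z. T z *\<^sub>v y z) z0 k \<longleftrightarrow> k \<le> root_mult n T z0 y"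
  unfolding root_mult_def
  by (rule vec_vanishes_to_order_iff_le_zero_order[OF open_S z0_in_S
        hol_vec_mult_mat_vec[OF hol_T y] not_vec_vanishes_T_beyond_sum[OF y y0]])

text \<open>A column \<open>l\<close> of \<open>W = UR(z0)\<^sup>-\<^sup>1 Y(z0)\<close> with \<open>k \<le> \<nu>(y_l)\<close> vanishes in the rows with
  \<open>m i < k\<close>, which by monotonicity of \<open>m\<close> are exactly the rows beyond \<open>{i. k \<le> m i}\<close>.\<close>

lemma card_root_mult_ge_le:
  assumes Y: "hol_mat S n r Y"
    and inj: "\<forall>v\<in>carrier_vec r. Y z0 *\<^sub>v v = 0\<^sub>v n \<longrightarrow> v = 0\<^sub>v r"
  shows "card {l. l < r \<and> k \<le> root_mult n T z0 (\<lambda>z. col (Y z) l)} \<le> card {i. i < n \<and> k \<le> m i}"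
proof -
  have Y0: "Y z0 \<in> carrier_mat n r" using Y z0_in_S unfolding hol_mat_def by auto
  have inv0: "UR_inv z0 \<in> carrier_mat n n" using hol_UR_inv z0_in_S unfolding hol_mat_def by auto
  define W where "W = UR_inv z0 * Y z0"
  have W: "W \<in> carrier_mat n r" using Y0 inv0 by (simp add: W_def)
  have YW: "Y z0 = UR z0 * W"
    using Y0 inv0 carrier_mats(3)[OF z0_in_S] UR_UR_inv[OF z0_in_S]
    by (simp add: W_def flip: assoc_mult_mat)
  have inj_W: "\<forall>v\<in>carrier_vec r. W *\<^sub>v v = 0\<^sub>v n \<longrightarrow> v = 0\<^sub>v r"
  proof (intro ballI impI)
    fix v :: "complex vec" assume v: "v \<in> carrier_vec r" "W *\<^sub>v v = 0\<^sub>v n"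
    have "Y z0 *\<^sub>v v = UR z0 *\<^sub>v (W *\<^sub>v v)"
      unfolding YW using carrier_mats(3)[OF z0_in_S] W v(1) by simp
    also have "\<dots> = 0\<^sub>v n" unfolding v(2) by (rule mult_mat_vec_zero[OF carrier_mats(3)[OF z0_in_S]])
    finally show "v = 0\<^sub>v r" using inj v(1) by blast
  qed
  have W_entry: "W $$ (i, l) = smith_coords (\<lambda>z. col (Y z) l) z0 $ i" if "i < n" "l < r" for i l
    using that Y0 inv0 by (simp add: W_def smith_coords_def)
  let ?p = "card {i. i < n \<and> k \<le> m i}"
  have "{i. i < n \<and> k \<le> m i} = {..<?p}"
    using m_anti by (rule antitone_superlevel_initial)
  then have small: "\<not> k \<le> m i" if "?p \<le> i" "i < n" for i
    using that by (metis (no_types, lifting) lessThan_iff mem_Collect_eq not_le)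
  show ?thesis
  proof (rule card_cols_supported_le[OF W inj_W])
    fix l i assume l: "l \<in> {l. l < r \<and> k \<le> root_mult n T z0 (\<lambda>z. col (Y z) l)}"
      and i: "?p \<le> i" "i < n"
    have y: "hol_vec S n (\<lambda>z. col (Y z) l)" using hol_mat_col[OF Y] l by simp
    have "col (Y z0) l \<noteq> 0\<^sub>v n" using inj_mat_col_nonzero[OF Y0 inj] l by simp
    then have "vec_vanishes_to_order n (\<lambda>z. T z *\<^sub>v col (Y z) l) z0 k"
      using vec_vanishes_T_iff_le_root_mult[OF y] l by simp
    then show "W $$ (i, l) = 0"
      using smith_coords_vanish[OF y _ i(2)] small[OF i] W_entry i l by simp
  qed auto
qed

lemma root_mults_canonical_iff:
  assumes Y: "hol_mat S n r Y"
    and inj: "\<forall>v\<in>carrier_vec r. Y z0 *\<^sub>v v = 0\<^sub>v n \<longrightarrow> v = 0\<^sub>v r"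
    and r: "r = kernel_dim (T z0)"
  defines "\<nu> \<equiv> \<lambda>l. root_mult n T z0 (\<lambda>z. col (Y z) l)"
  shows "(\<Sum>j<r. \<nu> j) = (\<Sum>j<r. m j) \<and> (\<forall>i j. i \<le> j \<longrightarrow> j < r \<longrightarrow> \<nu> j \<le> \<nu> i) \<longleftrightarrow>
    (\<forall>l<r. vec_vanishes_to_order n (\<lambda>z. T z *\<^sub>v col (Y z) l) z0 (m l))"
proof -
  have Y0: "Y z0 \<in> carrier_mat n r" using Y z0_in_S unfolding hol_mat_def by auto
  have "r \<le> n" by (rule inj_mat_dim_col_le[OF Y0 inj])
  have card_le: "card {l. l < r \<and> k \<le> \<nu> l} \<le> card {i. i < n \<and> k \<le> m i}" for k
    unfolding \<nu>_def by (rule card_root_mult_ge_le[OF Y inj])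
  have van_iff: "vec_vanishes_to_order n (\<lambda>z. T z *\<^sub>v col (Y z) l) z0 k \<longleftrightarrow> k \<le> \<nu> l"
    if "l < r" for l k
    unfolding \<nu>_def
    using vec_vanishes_T_iff_le_root_mult[OF hol_mat_col[OF Y that] inj_mat_col_nonzero[OF Y0 inj that]]
    by simp
  show ?thesis
  proof
    assume "(\<Sum>j<r. \<nu> j) = (\<Sum>j<r. m j) \<and> (\<forall>i j. i \<le> j \<longrightarrow> j < r \<longrightarrow> \<nu> j \<le> \<nu> i)"
    then have "\<nu> l = m l" if "l < r" for l
      using partial_multiplicities_eq_of_sum_eq[OF m_anti _ card_le _ that] by blast
    then show "\<forall>l<r. vec_vanishes_to_order n (\<lambda>z. T z *\<^sub>v col (Y z) l) z0 (m l)"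
      using van_iff by simp
  next
    assume "\<forall>l<r. vec_vanishes_to_order n (\<lambda>z. T z *\<^sub>v col (Y z) l) z0 (m l)"
    then have "\<nu> l = m l" if "l < r" for l
      using partial_multiplicities_eq_of_le[OF card_le _ _ that] m_pos_iff r van_iff by blast
    then show "(\<Sum>j<r. \<nu> j) = (\<Sum>j<r. m j) \<and> (\<forall>i j. i \<le> j \<longrightarrow> j < r \<longrightarrow> \<nu> j \<le> \<nu> i)"
      using m_anti \<open>r \<le> n\<close> by simp
  qed
qed

lemma right_canonical_iff:
  assumes \<Omega>: "S \<subseteq> \<Omega>" "hol_mat \<Omega> n n T" and Y: "hol_mat \<Omega> n r Y"
    and r: "r = kernel_dim (T z0)"
  shows "right_canonical \<Omega> n T z0 m r Y \<longleftrightarrow>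
    (\<forall>v\<in>carrier_vec r. Y z0 *\<^sub>v v = 0\<^sub>v n \<longrightarrow> v = 0\<^sub>v r) \<and>
    (\<forall>l<r. vec_vanishes_to_order n (\<lambda>z. T z *\<^sub>v col (Y z) l) z0 (m l))"
    (is "_ \<longleftrightarrow> ?inj \<and> ?van")
proof -
  have z0: "z0 \<in> \<Omega>" using \<Omega>(1) z0_in_S by blast
  have Y0: "Y z0 \<in> carrier_mat n r" using Y z0 unfolding hol_mat_def by blast
  let ?\<nu> = "\<lambda>l. root_mult n T z0 (\<lambda>z. col (Y z) l)"
  let ?mults = "(\<Sum>j<r. ?\<nu> j) = (\<Sum>j<r. m j) \<and> (\<forall>i j. i \<le> j \<longrightarrow> j < r \<longrightarrow> ?\<nu> j \<le> ?\<nu> i)"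
  have canonical: "?inj \<Longrightarrow> ?mults \<longleftrightarrow> ?van"
    by (rule root_mults_canonical_iff[OF hol_mat_subset[OF Y \<Omega>(1)] _ r])
  have roots: "\<forall>l<r. root_function \<Omega> n T z0 (\<lambda>z. col (Y z) l)" if ?inj ?van
  proof (intro allI impI)
    fix l assume "l < r"
    then show "root_function \<Omega> n T z0 (\<lambda>z. col (Y z) l)"
      using that m_pos_iff[of l] r inj_mat_dim_col_le[OF Y0 \<open>?inj\<close>]
      by (intro root_function_if_vanishes[OF z0 \<Omega>(2) hol_mat_col[OF Y]]
          inj_mat_col_nonzero[OF Y0]) auto
  qed
  have "right_canonical \<Omega> n T z0 m r Y \<longleftrightarrow>
      (\<forall>l<r. root_function \<Omega> n T z0 (\<lambda>z. col (Y z) l)) \<and> ?inj \<and> ?mults"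
    unfolding right_canonical_def inj_mat_iff_lin_indpt_cols[OF Y0] using Y by auto
  then show ?thesis using canonical roots by argo
qed

end

lemma local_smith_form_imp_smith_nbhd:
  assumes \<Omega>: "open \<Omega>" "z0 \<in> \<Omega>" and T: "hol_mat \<Omega> n n T" and sm: "local_smith_form n T z0 m"
  obtains S UL UR where "S \<subseteq> \<Omega>" "smith_nbhd n T z0 m S UL UR"
proof -
  obtain S0 UL UR where S0: "open S0" "z0 \<in> S0" and UL: "hol_mat S0 n n UL" and UR: "hol_mat S0 n n UR"
    and dets: "det (UL z0) \<noteq> 0" "det (UR z0) \<noteq> 0"
    and eq: "\<forall>z\<in>S0. UL z * T z * UR z = mat n n (\<lambda>(i, j). if i = j then (z - z0) ^ m i else 0)"
    using conjunct2[OF sm[unfolded local_smith_form_def]] by blast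
  have anti: "\<And>i j. i \<le> j \<Longrightarrow> j < n \<Longrightarrow> m j \<le> m i"
    using sm unfolding local_smith_form_def by simp
  define S where "S = (S0 \<inter> \<Omega>) \<inter> (\<lambda>z. det (UR z)) -` (- {0})"
  have "continuous_on (S0 \<inter> \<Omega>) (\<lambda>z. det (UR z))"
    using hol_det[OF hol_mat_subset[OF UR]] holomorphic_on_imp_continuous_on by blast
  then have "open S" unfolding S_def using S0(1) \<Omega>(1) by (intro continuous_open_preimage) auto
  have "S \<subseteq> \<Omega>" by (auto simp: S_def)
  moreover have "smith_nbhd n T z0 m S UL UR"
  proof
    show "open S" by fact
    show "z0 \<in> S" using S0(2) \<Omega>(2) dets(2) by (simp add: S_def)
    show "hol_mat S n n T" by (rule hol_mat_subset[OF T]) (auto simp: S_def)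
    show "hol_mat S n n UL" by (rule hol_mat_subset[OF UL]) (auto simp: S_def)
    show "hol_mat S n n UR" by (rule hol_mat_subset[OF UR]) (auto simp: S_def)
    show "det (UL z0) \<noteq> 0" by (rule dets(1))
    show "det (UR z) \<noteq> 0" if "z \<in> S" for z using that by (simp add: S_def)
    show "UL z * T z * UR z = mat n n (\<lambda>(i, j). if i = j then (z - z0) ^ m i else 0)"
      if "z \<in> S" for z using that eq by (simp add: S_def)
  qed (rule anti)
  ultimately show ?thesis by (rule that)
qed

theorem mainTheorem9:
  fixes \<Omega> :: "complex set" and z0 :: complex and n r :: nat
    and T Y :: "complex \<Rightarrow> complex mat" and m :: "nat \<Rightarrow> nat"
  assumes "open \<Omega>" and "z0 \<in> \<Omega>"
    and "hol_mat \<Omega> n n T"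
    and "\<exists>z\<in>\<Omega>. det (T z) \<noteq> 0"
    and "det (T z0) = 0"
    and "r = kernel_dim (T z0)"
    and "local_smith_form n T z0 m"
    and "hol_mat \<Omega> n r Y"
  shows "right_canonical \<Omega> n T z0 m r Y \<longleftrightarrow>
           (vec_space.rank n (Y z0) = r \<and> TYDinv_hol n T z0 m r Y)"
proof -
  obtain S UL UR where "S \<subseteq> \<Omega>" and "smith_nbhd n T z0 m S UL UR"
    using local_smith_form_imp_smith_nbhd[OF assms(1,2,3,7)] .
  then interpret smith_nbhd n T z0 m S UL UR by simp
  have "Y z0 \<in> carrier_mat n r" using assms(2,8) unfolding hol_mat_def by blast
  from full_col_rank_iff_inj_mat[OF this] show ?thesis
    using right_canonical_iff[OF \<open>S \<subseteq> \<Omega>\<close> assms(3,8,6)] TYDinv_hol_iff[OF assms(1,2,3,8)]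
    by simp
qed

end
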